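(* If $G$ is an extended $\mathcal C$-pair, then $\chi(G)\le\lceil\frac54\omega(G)\rceil$.
   Context: $\mathcal C$ is the class of $(P_4,C_4,2P_3)$-free graphs ($2P_3$: disjoint union of two copies of $P_3$). A graph is a $\mathcal C$-pair (with respect to a partition $(X,A)$ of its vertex set) if it is $P_6$-free and chordal, $A$ is a clique, $G[X]\in\mathcal C$, every vertex of $X$ has a neighbor in $A$, and any two non-adjacent vertices of $X$ have no common neighbor in $A$. A graph $G$ is an extended $\mathcal C$-pair if $V(G)$ can be partitioned into three sets $Q,X,A$ such that $G[X\cup A]$ is a $\mathcal C$-pair with respect to $(X,A)$, $Q$ is a clique, $Q$ is complete to $X$ (all edges present), and there are no edges between $Q$ and $A$. *)

theory Defs
  imports Complex_Main
begin

text \<open>A (finite simple) graph is given by a vertex set V and a symmetric,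
irreflexive adjacency relation E. Induced subgraphs G[S] are obtained by
restricting attention to a vertex subset S.\<close>

definition simple_graph :: "'a set \<Rightarrow> ('a \<Rightarrow> 'a \<Rightarrow> bool) \<Rightarrow> bool" where
  "simple_graph V E \<longleftrightarrow> finite V \<and> (\<forall>u v. E u v \<longrightarrow> E v u) \<and> (\<forall>v. \<not> E v v)"

definition has_induced :: "(nat \<Rightarrow> nat \<Rightarrow> bool) \<Rightarrow> nat \<Rightarrow> ('a \<Rightarrow> 'a \<Rightarrow> bool) \<Rightarrow> 'a set \<Rightarrow> bool" where
  "has_induced H n E S \<longleftrightarrow> (\<exists>f. inj_on f {..<n} \<and> f ` {..<n} \<subseteq> S \<and>
      (\<forall>i<n. \<forall>j<n. i \<noteq> j \<longrightarrow> (E (f i) (f j) \<longleftrightarrow> H i j)))"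

definition H_free :: "(nat \<Rightarrow> nat \<Rightarrow> bool) \<Rightarrow> nat \<Rightarrow> ('a \<Rightarrow> 'a \<Rightarrow> bool) \<Rightarrow> 'a set \<Rightarrow> bool" where
  "H_free H n E S \<longleftrightarrow> \<not> has_induced H n E S"

definition path_graph :: "nat \<Rightarrow> nat \<Rightarrow> bool" where
  "path_graph i j \<longleftrightarrow> i + 1 = j \<or> j + 1 = i"

definition cycle_graph :: "nat \<Rightarrow> nat \<Rightarrow> nat \<Rightarrow> bool" where
  "cycle_graph n i j \<longleftrightarrow> i + 1 = j \<or> j + 1 = i \<or> (i = 0 \<and> j = n - 1) \<or> (j = 0 \<and> i = n - 1)"

text \<open>2P_3: paths 0-1-2 and 3-4-5.\<close>
definition twoP3_graph :: "nat \<Rightarrow> nat \<Rightarrow> bool" where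
  "twoP3_graph i j \<longleftrightarrow> path_graph i j \<and> {i, j} \<noteq> {2, 3}"

definition P4_free where "P4_free E S \<longleftrightarrow> H_free path_graph 4 E S"
definition P6_free where "P6_free E S \<longleftrightarrow> H_free path_graph 6 E S"
definition C4_free where "C4_free E S \<longleftrightarrow> H_free (cycle_graph 4) 4 E S"
definition twoP3_free where "twoP3_free E S \<longleftrightarrow> H_free twoP3_graph 6 E S"

definition chordal where "chordal E S \<longleftrightarrow> (\<forall>n\<ge>4. H_free (cycle_graph n) n E S)"

definition in_class_C where
  "in_class_C E S \<longleftrightarrow> P4_free E S \<and> C4_free E S \<and> twoP3_free E S"

definition clique :: "('a \<Rightarrow> 'a \<Rightarrow> bool) \<Rightarrow> 'a set \<Rightarrow> bool" where
  "clique E K \<longleftrightarrow> (\<forall>x\<in>K. \<forall>y\<in>K. x \<noteq> y \<longrightarrow> E x y)"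

definition clique_number :: "'a set \<Rightarrow> ('a \<Rightarrow> 'a \<Rightarrow> bool) \<Rightarrow> nat" where
  "clique_number V E = Max {card K | K. K \<subseteq> V \<and> clique E K}"

definition proper_colouring :: "'a set \<Rightarrow> ('a \<Rightarrow> 'a \<Rightarrow> bool) \<Rightarrow> nat \<Rightarrow> ('a \<Rightarrow> nat) \<Rightarrow> bool" where
  "proper_colouring V E k c \<longleftrightarrow> (\<forall>v\<in>V. c v < k) \<and> (\<forall>u\<in>V. \<forall>v\<in>V. E u v \<longrightarrow> c u \<noteq> c v)"

definition chromatic_number :: "'a set \<Rightarrow> ('a \<Rightarrow> 'a \<Rightarrow> bool) \<Rightarrow> nat" where
  "chromatic_number V E = (LEAST k. \<exists>c. proper_colouring V E k c)"

definition C_pair :: "('a \<Rightarrow> 'a \<Rightarrow> bool) \<Rightarrow> 'a set \<Rightarrow> 'a set \<Rightarrow> bool" where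
  "C_pair E X A \<longleftrightarrow> X \<inter> A = {} \<and>
     P6_free E (X \<union> A) \<and> chordal E (X \<union> A) \<and> clique E A \<and> in_class_C E X \<and>
     (\<forall>x\<in>X. \<exists>a\<in>A. E x a) \<and>
     (\<forall>x\<in>X. \<forall>y\<in>X. x \<noteq> y \<and> \<not> E x y \<longrightarrow> \<not> (\<exists>a\<in>A. E x a \<and> E y a))"

definition extended_C_pair :: "'a set \<Rightarrow> ('a \<Rightarrow> 'a \<Rightarrow> bool) \<Rightarrow> bool" where
  "extended_C_pair V E \<longleftrightarrow> (\<exists>Q X A. Q \<union> X \<union> A = V \<and> Q \<inter> X = {} \<and> Q \<inter> A = {} \<and> X \<inter> A = {} \<and>
     C_pair E X A \<and> clique E Q \<and> (\<forall>q\<in>Q. \<forall>x\<in>X. E q x) \<and> (\<forall>q\<in>Q. \<forall>a\<in>A. \<not> E q a))"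

end

theory Submission
  imports Defs
begin

text \<open>Write \<open>\<omega>\<close> for the clique number, \<open>k = \<lceil>5\<omega>/4\<rceil>\<close> and \<open>q = |Q|\<close>. Since \<open>G[X \<union> A]\<close> has
  no induced \<open>C\<^sub>4\<close>, the \<open>A\<close>-neighbourhoods of adjacent vertices of \<open>X\<close> are nested, while those of
  non-adjacent ones are disjoint; so together with \<open>A\<close> they form a laminar family, and ordering
  \<open>X \<union> A\<close> by the size of the \<open>A\<close>-neighbourhood (with \<open>A\<close> last) is a perfect elimination ordering.
  Give each member \<open>S\<close> of the family the demand \<open>\<mu>(S) + |S| - (k - q)\<close>, where \<open>\<mu>(S)\<close> is the
  largest clique of \<open>X\<close> complete to \<open>S\<close>. A counting argument (the source of the factor 5/4)
  bounds the total demand of disjoint members by \<open>q\<close>, so on a laminar family some \<open>A0 \<subseteq> A\<close> of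
  at most \<open>q\<close> vertices meets every demand, and then every clique of \<open>X \<union> (A - A0)\<close> has at most
  \<open>k - q\<close> vertices. Colour the anticomplete cliques \<open>Q\<close> and \<open>A0\<close> with \<open>q\<close> common colours and
  \<open>X \<union> (A - A0)\<close> greedily with \<open>k - q\<close> further ones.\<close>

lemma clique_subset: "clique E K \<Longrightarrow> L \<subseteq> K \<Longrightarrow> clique E L"
  unfolding clique_def by blast

lemma clique_Un:
  assumes "clique E K" "clique E L" "\<And>u v. u \<in> K \<Longrightarrow> v \<in> L \<Longrightarrow> E u v"
    and "\<And>u v. E u v \<Longrightarrow> E v u"
  shows "clique E (K \<union> L)"
  using assms unfolding clique_def by blast

lemma card_le_clique_number:
  assumes "finite V" "K \<subseteq> V" "clique E K"
  shows "card K \<le> clique_number V E"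
proof -
  have "{card K | K. K \<subseteq> V \<and> clique E K} \<subseteq> card ` Pow V" by auto
  then have "finite {card K | K. K \<subseteq> V \<and> clique E K}"
    using assms(1) by (meson finite_Pow_iff finite_imageI finite_subset)
  then show ?thesis unfolding clique_number_def using assms by (intro Max_ge) auto
qed

lemma proper_colouring_imp_chromatic_number_le:
  "proper_colouring V E k c \<Longrightarrow> chromatic_number V E \<le> k"
  unfolding chromatic_number_def by (rule Least_le) blast

lemma proper_colouring_mono:
  "proper_colouring V E k c \<Longrightarrow> k \<le> l \<Longrightarrow> proper_colouring V E l c"
  unfolding proper_colouring_def by auto

lemma proper_colouring_card:
  assumes "finite B" "\<And>v. \<not> E v v"
  shows "\<exists>c. proper_colouring B E (card B) c"
proof -
  obtain c where c: "bij_betw c B {0..<card B}" using ex_bij_betw_finite_nat[OF assms(1)] by blast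
  then have "proper_colouring B E (card B) c"
    unfolding proper_colouring_def bij_betw_def inj_on_def using assms(2) by auto
  then show ?thesis by blast
qed

lemma proper_colouring_Un_anticomplete:
  assumes "proper_colouring B E k c" "proper_colouring B' E k c'"
    and "\<And>u v. u \<in> B \<Longrightarrow> v \<in> B' \<Longrightarrow> \<not> E u v \<and> \<not> E v u"
  shows "\<exists>c''. proper_colouring (B \<union> B') E k c''"
proof -
  have "proper_colouring (B \<union> B') E k (\<lambda>v. if v \<in> B then c v else c' v)"
    using assms unfolding proper_colouring_def by auto
  then show ?thesis by blast
qed

lemma proper_colouring_Un:
  assumes "proper_colouring B E k c" "proper_colouring S E l c'"
  shows "\<exists>c''. proper_colouring (B \<union> S) E (k + l) c''"
proof -
  have "proper_colouring (B \<union> S) E (k + l) (\<lambda>v. if v \<in> B then c v else k + c' v)"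
    using assms unfolding proper_colouring_def by (auto simp: add_less_le_mono)
  then show ?thesis by blast
qed

lemma exists_unused_colour:
  assumes "finite N" "card N < m"
  obtains col where "col < m" "col \<notin> c ` N"
proof -
  have "card (c ` N) < card {..<m}" using card_image_le[OF assms(1), of c] assms(2) by simp
  then have "\<not> {..<m} \<subseteq> c ` N" using card_mono[OF finite_imageI[OF assms(1)]] by fastforce
  then show ?thesis using that by auto
qed

lemma proper_colouring_insert:
  assumes "proper_colouring T E m c" "col < m" "\<And>w. w \<in> T \<Longrightarrow> E x w \<Longrightarrow> c w \<noteq> col"
    and "\<And>u v. E u v \<Longrightarrow> E v u" "\<not> E x x"
  shows "proper_colouring (insert x T) E m (c(x := col))"
  using assms unfolding proper_colouring_def by auto

text \<open>Colour in order of decreasing \<open>h\<close>: the previously coloured neighbours of a vertex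
  form a clique with it, so they use fewer than \<open>m\<close> colours.\<close>
lemma greedy_colouring:
  fixes h :: "'a \<Rightarrow> nat"
  assumes "finite S" and sym: "\<And>u v. E u v \<Longrightarrow> E v u" and irrefl: "\<And>v. \<not> E v v"
    and later_nbrs: "\<And>v. v \<in> S \<Longrightarrow> clique E {u \<in> S. E v u \<and> h v \<le> h u}"
    and cliques: "\<And>K. K \<subseteq> S \<Longrightarrow> clique E K \<Longrightarrow> card K \<le> m"
  shows "\<exists>c. proper_colouring S E m c"
proof -
  have "T \<subseteq> S \<longrightarrow> (\<exists>c. proper_colouring T E m c)" if "finite T" for T
    using that
  proof (induction T rule: finite_ranking_induct[where f = "\<lambda>v. - int (h v)"])
    case empty
    show ?case unfolding proper_colouring_def by simp
  next
    case (insert x T)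
    show ?case
    proof
      assume sub: "insert x T \<subseteq> S"
      then obtain c where c: "proper_colouring T E m c" using insert.IH by blast
      define N where "N = {w \<in> T. E x w}"
      have "N \<subseteq> {u \<in> S. E x u \<and> h x \<le> h u}" using sub insert.hyps(2) by (auto simp: N_def)
      then have "clique E N" using clique_subset later_nbrs sub by blast
      then have "clique E (insert x N)" using sym unfolding clique_def N_def by blast
      moreover have "insert x N \<subseteq> S" using sub by (auto simp: N_def)
      ultimately have "card (insert x N) \<le> m" by (rule cliques[rotated])
      moreover have "finite N" "x \<notin> N" using insert.hyps(1) irrefl by (auto simp: N_def)
      ultimately obtain col where "col < m" "col \<notin> c ` N"
        using exists_unused_colour[of N m c] by force
      then have "proper_colouring (insert x T) E m (c(x := col))"
        using proper_colouring_insert[OF c _ _ sym irrefl] by (force simp: N_def)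
      then show "\<exists>c. proper_colouring (insert x T) E m c" by blast
    qed
  qed
  then show ?thesis using assms(1) by blast
qed

definition laminar :: "'a set set \<Rightarrow> bool" where
  "laminar L \<longleftrightarrow> (\<forall>S\<in>L. \<forall>T\<in>L. S \<subseteq> T \<or> T \<subseteq> S \<or> disjnt S T)"

lemma laminar_subset: "laminar L \<Longrightarrow> L' \<subseteq> L \<Longrightarrow> laminar L'"
  unfolding laminar_def by blast

definition max_disjoint_sum :: "('a set \<Rightarrow> nat) \<Rightarrow> 'a set set \<Rightarrow> nat" where
  "max_disjoint_sum D L = Max (sum D ` {F. F \<subseteq> L \<and> pairwise disjnt F})"

lemma finite_disjoint_subfamilies: "finite L \<Longrightarrow> finite {F. F \<subseteq> L \<and> pairwise disjnt F}"
  by (rule finite_subset[of _ "Pow L"]) auto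

lemma max_disjoint_sum_ge:
  assumes "finite L" "F \<subseteq> L" "pairwise disjnt F"
  shows "sum D F \<le> max_disjoint_sum D L"
  unfolding max_disjoint_sum_def
  using assms finite_disjoint_subfamilies[OF assms(1)] by (intro Max_ge) auto

lemma max_disjoint_sum_attained:
  assumes "finite L"
  obtains F where "F \<subseteq> L" "pairwise disjnt F" "sum D F = max_disjoint_sum D L"
proof -
  have "sum D ` {F. F \<subseteq> L \<and> pairwise disjnt F} \<noteq> {}"
    using pairwise_empty by blast
  then have "max_disjoint_sum D L \<in> sum D ` {F. F \<subseteq> L \<and> pairwise disjnt F}"
    unfolding max_disjoint_sum_def
    using finite_disjoint_subfamilies[OF assms] by (intro Max_in finite_imageI)
  then obtain F where "F \<subseteq> L" "pairwise disjnt F" "max_disjoint_sum D L = sum D F" by auto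
  then show ?thesis using that by simp
qed

lemma max_disjoint_sum_le_card:
  assumes "finite L" "finite M" "\<And>S. S \<in> L \<Longrightarrow> S \<subseteq> M" "\<And>S. S \<in> L \<Longrightarrow> D S \<le> card S"
  shows "max_disjoint_sum D L \<le> card M"
proof -
  obtain F where F: "F \<subseteq> L" "pairwise disjnt F" "sum D F = max_disjoint_sum D L"
    using max_disjoint_sum_attained[OF assms(1)] .
  have fin: "\<And>S. S \<in> F \<Longrightarrow> finite S" using F(1) assms(2,3) finite_subset by blast
  have "sum D F \<le> sum card F" using F(1) assms(4) by (intro sum_mono) auto
  also have "\<dots> = card (\<Union>F)" using card_Union_disjoint[OF F(2) fin] by simp
  also have "\<dots> \<le> card M" using F(1) assms(2,3) by (intro card_mono) auto
  finally show ?thesis using F(3) by simp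
qed

text \<open>Either the best inner family or \<open>{M}\<close> joins the best outer family to a disjoint
  subfamily of \<open>L\<close>.\<close>
lemma max_disjoint_sum_split:
  assumes "finite L" "M \<in> L" "Lin \<subseteq> L" "Lout \<subseteq> L"
    and "\<And>S. S \<in> Lin \<Longrightarrow> S \<subseteq> M" "\<And>S. S \<in> Lout \<Longrightarrow> S \<noteq> {} \<and> disjnt S M"
  shows "max (D M) (max_disjoint_sum D Lin) + max_disjoint_sum D Lout \<le> max_disjoint_sum D L"
proof -
  have fin: "finite Lin" "finite Lout" using assms(1,3,4) finite_subset by auto
  obtain Fin where Fin: "Fin \<subseteq> Lin" "pairwise disjnt Fin" "sum D Fin = max_disjoint_sum D Lin"
    using max_disjoint_sum_attained[OF fin(1)] .
  obtain Fout where Fout: "Fout \<subseteq> Lout" "pairwise disjnt Fout"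
    "sum D Fout = max_disjoint_sum D Lout"
    using max_disjoint_sum_attained[OF fin(2)] .
  define F0 where "F0 = (if D M \<le> sum D Fin then Fin else {M})"
  have F0: "F0 \<subseteq> L" "pairwise disjnt F0" "\<And>S. S \<in> F0 \<Longrightarrow> S \<subseteq> M"
    "sum D F0 = max (D M) (max_disjoint_sum D Lin)"
    using Fin assms(2,3,5) by (auto simp: F0_def split: if_splits)
  have cross: "disjnt S T" if "S \<in> F0" "T \<in> Fout" for S T
    using F0(3)[OF that(1)] assms(6) Fout(1) that(2) by (fastforce simp: disjnt_def)
  have "F0 \<inter> Fout = {}" using cross assms(6) Fout(1) by (fastforce simp: disjnt_def)
  moreover have "finite F0" "finite Fout"
    using F0(1) Fout(1) assms(1,4) by (auto intro: finite_subset)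
  ultimately have "sum D (F0 \<union> Fout) = sum D F0 + sum D Fout" by (rule sum.union_disjoint[rotated 2])
  moreover have "pairwise disjnt (F0 \<union> Fout)"
    using F0(2) Fout(2) cross unfolding pairwise_def by (metis Un_iff disjnt_sym)
  then have "sum D (F0 \<union> Fout) \<le> max_disjoint_sum D L"
    using F0(1) Fout(1) assms(1,4) by (intro max_disjoint_sum_ge) auto
  ultimately show ?thesis using F0(4) Fout(3) by simp
qed

lemma laminar_largest_member:
  assumes "finite L" "\<And>S. S \<in> L \<Longrightarrow> finite S" "laminar L" "L \<noteq> {}"
  obtains M where "M \<in> L" "\<And>S. S \<in> L \<Longrightarrow> S = M \<or> S \<subset> M \<or> disjnt S M"
proof -
  have "Max (card ` L) \<in> card ` L" using assms(1,4) by (intro Max_in) auto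
  then obtain M where M: "M \<in> L" "card M = Max (card ` L)" by auto
  have split: "S = M \<or> S \<subset> M \<or> disjnt S M" if "S \<in> L" for S
  proof -
    have "card S \<le> card M" using M that assms(1) by simp
    then have "\<not> M \<subset> S" using psubset_card_mono assms(2) that by (meson leD)
    then show ?thesis using assms(3) M(1) that unfolding laminar_def by blast
  qed
  show ?thesis by (rule that[OF M(1) split])
qed

text \<open>Induction on \<open>|L|\<close>: a largest member \<open>M\<close> splits the other members into those inside
  \<open>M\<close> and those disjoint from \<open>M\<close>. A hitting set for the inner ones, padded inside \<open>M\<close> to
  meet the demand of \<open>M\<close>, together with one for the outer ones does the job.\<close>
lemma laminar_hitting_set:
  fixes D :: "'a set \<Rightarrow> nat"
  assumes "finite L" "\<And>S. S \<in> L \<Longrightarrow> finite S" "laminar L" "\<And>S. S \<in> L \<Longrightarrow> D S \<le> card S"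
  shows "\<exists>H \<subseteq> \<Union>L. card H \<le> max_disjoint_sum D L \<and> (\<forall>S\<in>L. D S \<le> card (H \<inter> S))"
  using assms
proof (induction "card L" arbitrary: L rule: less_induct)
  case less
  show ?case
  proof (cases "L = {}")
    case True
    then show ?thesis by auto
  next
    case False
    obtain M where M: "M \<in> L" and split: "\<And>S. S \<in> L \<Longrightarrow> S = M \<or> S \<subset> M \<or> disjnt S M"
      using laminar_largest_member[OF less.prems(1-3) False] by blast
    have finM: "finite M" using M less.prems(2) by blast
    have IH: "\<exists>H \<subseteq> \<Union>L'. card H \<le> max_disjoint_sum D L' \<and> (\<forall>S\<in>L'. D S \<le> card (H \<inter> S))"
      if "L' \<subseteq> L" "M \<notin> L'" for L'
    proof -
      have "card L' < card L" using that M less.prems(1) by (intro psubset_card_mono) auto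
      then show ?thesis
        by (rule less.hyps[OF _ finite_subset[OF that(1) less.prems(1)]])
          (use that less.prems in \<open>auto intro: laminar_subset\<close>)
    qed
    define Lin where "Lin = {S \<in> L. S \<subset> M}"
    define Lout where "Lout = {S \<in> L. S \<noteq> {} \<and> disjnt S M}"
    have Lin: "Lin \<subseteq> L" "M \<notin> Lin" and Lout: "Lout \<subseteq> L" "M \<notin> Lout"
      by (auto simp: Lin_def Lout_def disjnt_def)
    obtain Hin where Hin: "Hin \<subseteq> \<Union>Lin" "card Hin \<le> max_disjoint_sum D Lin"
      "\<forall>S\<in>Lin. D S \<le> card (Hin \<inter> S)"
      using IH[OF Lin] by blast
    obtain Hout where Hout: "Hout \<subseteq> \<Union>Lout" "card Hout \<le> max_disjoint_sum D Lout"
      "\<forall>S\<in>Lout. D S \<le> card (Hout \<inter> S)"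
      using IH[OF Lout] by blast
    define r where "r = max (D M) (max_disjoint_sum D Lin)"
    have "max_disjoint_sum D Lin \<le> card M"
      using Lin(1) less.prems(1,4) finM
      by (intro max_disjoint_sum_le_card) (auto simp: Lin_def intro: finite_subset)
    then have "r \<le> card M" using less.prems(4)[OF M] by (simp add: r_def)
    moreover have "Hin \<subseteq> M" using Hin(1) by (auto simp: Lin_def)
    moreover have "card Hin \<le> r" using Hin(2) by (simp add: r_def)
    ultimately obtain Hin' where Hin': "Hin \<subseteq> Hin'" "Hin' \<subseteq> M" "card Hin' = r"
      using exists_subset_between[of Hin r M] finM by blast
    define H where "H = Hin' \<union> Hout"
    have "finite (\<Union>Lout)" using Lout(1) less.prems(1,2) by (auto intro: finite_subset)
    then have finH: "finite H" using Hin'(2) Hout(1) finM by (auto simp: H_def intro: finite_subset)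
    have "card H \<le> r + max_disjoint_sum D Lout"
      using card_Un_le[of Hin' Hout] Hin'(3) Hout(2) by (simp add: H_def)
    also have "\<dots> \<le> max_disjoint_sum D L"
      unfolding r_def using less.prems(1) M Lin(1) Lout(1)
      by (intro max_disjoint_sum_split) (auto simp: Lin_def Lout_def)
    finally have "card H \<le> max_disjoint_sum D L" .
    moreover have "H \<subseteq> \<Union>L" using Hin'(2) Hout(1) M Lout(1) unfolding H_def by blast
    moreover have "D S \<le> card (H \<inter> S)" if S: "S \<in> L" for S
    proof -
      consider "S = M" | "S \<in> Lin" | "S \<in> Lout" | "S = {}"
        using split[OF S] S by (auto simp: Lin_def Lout_def)
      then show ?thesis
      proof cases
        case 1
        have "D M \<le> card Hin'" using Hin'(3) by (simp add: r_def)
        also have "\<dots> \<le> card (H \<inter> M)" using Hin'(2) finH by (intro card_mono) (auto simp: H_def)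
        finally show ?thesis using 1 by simp
      next
        case 2
        then have "D S \<le> card (Hin \<inter> S)" using Hin(3) by blast
        also have "\<dots> \<le> card (H \<inter> S)" using Hin'(1) finH by (intro card_mono) (auto simp: H_def)
        finally show ?thesis .
      next
        case 3
        then have "D S \<le> card (Hout \<inter> S)" using Hout(3) by blast
        also have "\<dots> \<le> card (H \<inter> S)" using finH by (intro card_mono) (auto simp: H_def)
        finally show ?thesis .
      next
        case 4
        then show ?thesis using less.prems(4)[OF S] by simp
      qed
    qed
    ultimately show ?thesis by blast
  qed
qed

lemma excess_sum_le:
  fixes m s :: "'b \<Rightarrow> nat"
  assumes "finite P" and m_q: "\<And>i. i \<in> P \<Longrightarrow> m i + q \<le> w"
    and m_s: "\<And>i. i \<in> P \<Longrightarrow> m i + s i \<le> w"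
    and sum_s: "sum s P \<le> w" and pos: "\<And>i. i \<in> P \<Longrightarrow> t < m i + s i"
    and k: "5 * w \<le> 4 * (t + q)" and q: "w < 4 * q"
  shows "(\<Sum>i\<in>P. m i + s i - t) \<le> q"
proof -
  consider "card P = 0" | "card P = 1" | "card P = 2" | "card P \<ge> 3" by linarith
  then show ?thesis
  proof cases
    case 1
    then show ?thesis using assms(1) by simp
  next
    case 2
    then obtain i where "P = {i}" using card_1_singleton_iff[of P] by auto
    then show ?thesis using m_s[of i] k by auto
  next
    case 3
    then obtain i j where ij: "P = {i, j}" "i \<noteq> j" using card_2_iff[of P] by auto
    then have "m i + q \<le> w" "m j + q \<le> w" "m i + s i \<le> w" "m j + s j \<le> w"
      "t < m i + s i" "t < m j + s j" "s i + s j \<le> w"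
      using m_q m_s pos sum_s by auto
    then show ?thesis using ij k by auto
  next
    case 4
    define p where "p = card P"
    have "int (\<Sum>i\<in>P. m i + s i - t)
        = (\<Sum>i\<in>P. int (m i)) + (\<Sum>i\<in>P. int (s i)) - int p * int t"
      using pos by (simp add: of_nat_diff sum.distrib sum_subtractf p_def less_imp_le)
    moreover have "(\<Sum>i\<in>P. int (m i)) \<le> int p * (int w - int q)"
      using sum_bounded_above[of P "\<lambda>i. int (m i)" "int w - int q"] m_q by (force simp: p_def)
    moreover have "(\<Sum>i\<in>P. int (s i)) \<le> int w" using sum_s by (simp flip: of_nat_sum)
    moreover have "int p * (5 * int w) \<le> int p * (4 * (int t + int q))"
      using k by (intro mult_left_mono) auto
    moreover have "3 * int w \<le> int p * int w" using 4 by (intro mult_right_mono) (auto simp: p_def)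
    ultimately have "4 * int (\<Sum>i\<in>P. m i + s i - t) < 4 * int q"
      using q by (simp add: algebra_simps)
    then show ?thesis by linarith
  qed
qed

lemma C4_free_no_square:
  assumes "C4_free E Y" and sym: "\<And>u v. E u v \<Longrightarrow> E v u"
    and "{a, b, c, d} \<subseteq> Y" "distinct [a, b, c, d]"
    and "E a b" "E b c" "E c d" "E d a" "\<not> E a c" "\<not> E b d"
  shows False
proof -
  define f where "f = (!) [a, b, c, d]"
  have four: "{..<4::nat} = {0, 1, 2, 3}" by (auto simp: numeral_eq_Suc lessThan_Suc)
  have reversed: "E b a" "E c b" "E d c" "E a d" "\<not> E c a" "\<not> E d b"
    using assms(5-10) sym by blast+
  have "inj_on f {..<4}" using assms(4) unfolding f_def inj_on_def four by auto
  moreover have "f ` {..<4} \<subseteq> Y" using assms(3) by (auto simp: f_def four)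
  moreover have "E (f i) (f j) \<longleftrightarrow> cycle_graph 4 i j" if "i < 4" "j < 4" "i \<noteq> j" for i j
    using that assms(5-10) reversed unfolding four lessThan_iff[symmetric]
    by (auto simp: f_def cycle_graph_def)
  ultimately have "has_induced (cycle_graph 4) 4 E Y" unfolding has_induced_def by blast
  then show False using assms(1) unfolding C4_free_def H_free_def by blast
qed

text \<open>The properties of an extended \<open>\<C>\<close>-pair used below; chordality of \<open>G[X \<union> A]\<close> enters
  only through the absence of induced \<open>C\<^sub>4\<close>.\<close>
locale extended_pair =
  fixes V :: "'a set" and E :: "'a \<Rightarrow> 'a \<Rightarrow> bool" and Q X A :: "'a set"
  assumes finite_V: "finite V"
    and E_sym: "\<And>u v. E u v \<Longrightarrow> E v u" and E_irrefl: "\<And>v. \<not> E v v"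
    and V_eq: "V = Q \<union> X \<union> A"
    and disjoint: "Q \<inter> X = {}" "Q \<inter> A = {}" "X \<inter> A = {}"
    and clique_Q: "clique E Q" and clique_A: "clique E A"
    and Q_X: "\<And>q x. q \<in> Q \<Longrightarrow> x \<in> X \<Longrightarrow> E q x"
    and Q_A: "\<And>q a. q \<in> Q \<Longrightarrow> a \<in> A \<Longrightarrow> \<not> E q a"
    and X_A: "\<And>x. x \<in> X \<Longrightarrow> \<exists>a\<in>A. E x a"
    and common_A_nbr: "\<And>x y a. x \<in> X \<Longrightarrow> y \<in> X \<Longrightarrow> x \<noteq> y \<Longrightarrow> a \<in> A \<Longrightarrow>
      E x a \<Longrightarrow> E y a \<Longrightarrow> E x y"
    and C4_free: "C4_free E (X \<union> A)"

lemma extended_C_pair_imp_extended_pair: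
  assumes "simple_graph V E" "extended_C_pair V E"
  shows "\<exists>Q X A. extended_pair V E Q X A"
proof -
  obtain Q X A where part: "Q \<union> X \<union> A = V" "Q \<inter> X = {}" "Q \<inter> A = {}" "X \<inter> A = {}"
    and pair: "C_pair E X A" and Q: "clique E Q" "\<forall>q\<in>Q. \<forall>x\<in>X. E q x" "\<forall>q\<in>Q. \<forall>a\<in>A. \<not> E q a"
    using assms(2) unfolding extended_C_pair_def by blast
  have "extended_pair V E Q X A"
  proof
    show "finite V" "\<And>u v. E u v \<Longrightarrow> E v u" "\<And>v. \<not> E v v"
      using assms(1) unfolding simple_graph_def by blast+
    show "V = Q \<union> X \<union> A" "Q \<inter> X = {}" "Q \<inter> A = {}" "X \<inter> A = {}" using part by auto
    show "clique E Q" "\<And>q x. q \<in> Q \<Longrightarrow> x \<in> X \<Longrightarrow> E q x" "\<And>q a. q \<in> Q \<Longrightarrow> a \<in> A \<Longrightarrow> \<not> E q a"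
      using Q by blast+
    show "clique E A" "\<And>x. x \<in> X \<Longrightarrow> \<exists>a\<in>A. E x a"
      "\<And>x y a. x \<in> X \<Longrightarrow> y \<in> X \<Longrightarrow> x \<noteq> y \<Longrightarrow> a \<in> A \<Longrightarrow> E x a \<Longrightarrow> E y a \<Longrightarrow> E x y"
      using pair unfolding C_pair_def by blast+
    show "C4_free E (X \<union> A)"
      using pair unfolding C_pair_def chordal_def C4_free_def by simp
  qed
  then show ?thesis by blast
qed

context extended_pair
begin

lemma finite_X: "finite X" and finite_A: "finite A" and finite_Q: "finite Q"
  using finite_V V_eq by auto

lemma card_clique_le: "K \<subseteq> V \<Longrightarrow> clique E K \<Longrightarrow> card K \<le> clique_number V E"
  using card_le_clique_number finite_V by blast

lemma card_A_le: "card A \<le> clique_number V E"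
  using card_clique_le clique_A V_eq by blast

lemma card_Q_le: "card Q \<le> clique_number V E"
  using card_clique_le clique_Q V_eq by blast

definition A_nbhd :: "'a \<Rightarrow> 'a set" where
  "A_nbhd x = {a \<in> A. E x a}"

lemma A_nbhd_subset: "A_nbhd x \<subseteq> A"
  by (auto simp: A_nbhd_def)

lemma finite_A_nbhd: "finite (A_nbhd x)"
  using finite_A A_nbhd_subset by (rule finite_subset[rotated])

lemma A_nbhd_nonempty: "x \<in> X \<Longrightarrow> A_nbhd x \<noteq> {}"
  using X_A by (auto simp: A_nbhd_def)

lemma A_nbhd_disjnt: "x \<in> X \<Longrightarrow> y \<in> X \<Longrightarrow> x \<noteq> y \<Longrightarrow> \<not> E x y \<Longrightarrow> disjnt (A_nbhd x) (A_nbhd y)"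
  using common_A_nbr by (auto simp: A_nbhd_def disjnt_def)

text \<open>Otherwise \<open>x a b y\<close> would be an induced \<open>C\<^sub>4\<close>.\<close>
lemma A_nbhd_nested:
  assumes "x \<in> X" "y \<in> X" "E x y"
  shows "A_nbhd x \<subseteq> A_nbhd y \<or> A_nbhd y \<subseteq> A_nbhd x"
proof (rule ccontr)
  assume "\<not> ?thesis"
  then obtain a b where a: "a \<in> A" "E x a" "\<not> E y a" and b: "b \<in> A" "E y b" "\<not> E x b"
    by (auto simp: A_nbhd_def)
  have "distinct [x, a, b, y]"
    using assms a b disjoint(3) E_irrefl by auto
  moreover have "E a b" using clique_A a b \<open>distinct [x, a, b, y]\<close> unfolding clique_def by simp
  ultimately show False
    using C4_free_no_square[OF C4_free E_sym, of x a b y] assms a b E_sym by blast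
qed

lemma A_nbhd_subset_if_card_le:
  assumes "x \<in> X" "y \<in> X" "E x y" "card (A_nbhd x) \<le> card (A_nbhd y)"
  shows "A_nbhd x \<subseteq> A_nbhd y"
  using A_nbhd_nested[OF assms(1-3)] card_seteq[OF finite_A_nbhd] assms(4) by blast

lemma laminar_A_nbhds: "laminar (insert A (A_nbhd ` X))"
proof -
  have "A_nbhd x \<subseteq> A_nbhd y \<or> A_nbhd y \<subseteq> A_nbhd x \<or> disjnt (A_nbhd x) (A_nbhd y)"
    if "x \<in> X" "y \<in> X" for x y
    using that A_nbhd_nested A_nbhd_disjnt by (cases "x = y \<or> E x y") auto
  then show ?thesis unfolding laminar_def using A_nbhd_subset by blast
qed

lemma clique_least_A_nbhd:
  assumes "K \<subseteq> X" "clique E K" "K \<noteq> {}"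
  obtains c where "c \<in> K" "\<And>c'. c' \<in> K \<Longrightarrow> A_nbhd c \<subseteq> A_nbhd c'"
proof -
  obtain c where c: "c \<in> K" "\<And>c'. c' \<in> K \<Longrightarrow> card (A_nbhd c) \<le> card (A_nbhd c')"
    using ex_has_least_nat[of "\<lambda>c. c \<in> K" _ "\<lambda>c. card (A_nbhd c)"] assms(3) by blast
  have "A_nbhd c \<subseteq> A_nbhd c'" if "c' \<in> K" for c'
  proof (cases "c' = c")
    case False
    then have "E c c'" using assms(2) c(1) that unfolding clique_def by auto
    then show ?thesis using A_nbhd_subset_if_card_le assms(1) c that by blast
  qed simp
  then show ?thesis using that c(1) by blast
qed

definition cliques_complete_to :: "'a set \<Rightarrow> 'a set set" where
  "cliques_complete_to S = {C. C \<subseteq> X \<and> clique E C \<and> (\<forall>c\<in>C. S \<subseteq> A_nbhd c)}"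

definition max_clique_complete_to :: "'a set \<Rightarrow> nat" where
  "max_clique_complete_to S = Max (card ` cliques_complete_to S)"

lemma finite_cliques_complete_to: "finite (cliques_complete_to S)"
  using finite_X by (auto simp: cliques_complete_to_def intro: finite_subset[of _ "Pow X"])

lemma card_le_max_clique_complete_to:
  "C \<in> cliques_complete_to S \<Longrightarrow> card C \<le> max_clique_complete_to S"
  unfolding max_clique_complete_to_def using finite_cliques_complete_to by simp

lemma max_clique_complete_to_attained:
  obtains C where "C \<subseteq> X" "clique E C" "\<And>c. c \<in> C \<Longrightarrow> S \<subseteq> A_nbhd c"
    "card C = max_clique_complete_to S"
proof -
  have "{} \<in> cliques_complete_to S" by (simp add: cliques_complete_to_def clique_def)
  then have "max_clique_complete_to S \<in> card ` cliques_complete_to S"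
    unfolding max_clique_complete_to_def using finite_cliques_complete_to
    by (intro Max_in finite_imageI) blast+
  then show ?thesis using that unfolding cliques_complete_to_def by auto
qed

lemma max_clique_complete_to_add_card_Q:
  "max_clique_complete_to S + card Q \<le> clique_number V E"
proof -
  obtain C where C: "C \<subseteq> X" "clique E C" "card C = max_clique_complete_to S"
    using max_clique_complete_to_attained by metis
  have "clique E (C \<union> Q)"
    using clique_Un[OF C(2) clique_Q _ E_sym] Q_X E_sym C(1) by blast
  then have "card (C \<union> Q) \<le> clique_number V E" using C(1) V_eq by (intro card_clique_le) auto
  moreover have "card (C \<union> Q) = card C + card Q"
    using C(1) disjoint(1) finite_X finite_Q by (intro card_Un_disjoint) (auto intro: finite_subset)
  ultimately show ?thesis using C(3) by simp
qed

lemma max_clique_complete_to_add_card: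
  assumes "S \<subseteq> A"
  shows "max_clique_complete_to S + card S \<le> clique_number V E"
proof -
  obtain C where C: "C \<subseteq> X" "clique E C" "\<And>c. c \<in> C \<Longrightarrow> S \<subseteq> A_nbhd c"
    "card C = max_clique_complete_to S"
    using max_clique_complete_to_attained by metis
  have "clique E (C \<union> S)"
    using clique_Un[OF C(2) clique_subset[OF clique_A assms] _ E_sym] C(3)
    by (auto simp: A_nbhd_def)
  then have "card (C \<union> S) \<le> clique_number V E" using C(1) assms V_eq by (intro card_clique_le) auto
  moreover have "card (C \<union> S) = card C + card S"
    using C(1) assms disjoint(3) finite_X finite_A by (intro card_Un_disjoint) (auto intro: finite_subset)
  ultimately show ?thesis using C(4) by simp
qed

text \<open>A vertex of \<open>K \<inter> X\<close> with least \<open>A\<close>-neighbourhood \<open>S\<close> sees all of \<open>K - X\<close>, so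
  \<open>|K| \<le> max_clique_complete_to S + |S - A0|\<close>.\<close>
lemma clique_card_le_after_removal:
  assumes "A0 \<subseteq> A"
    and demand: "\<And>S. S \<in> insert A (A_nbhd ` X) \<Longrightarrow>
      max_clique_complete_to S + card S - t \<le> card (S \<inter> A0)"
    and K: "K \<subseteq> X \<union> (A - A0)" "clique E K"
  shows "card K \<le> t"
proof (cases "K \<inter> X = {}")
  case True
  then have "card K \<le> card (A - A0)" using K(1) finite_A by (intro card_mono) auto
  also have "\<dots> = card A - card A0"
    using assms(1) finite_A by (simp add: card_Diff_subset finite_subset)
  finally show ?thesis using demand[of A] assms(1) by (simp add: Int_absorb1)
next
  case False
  obtain c where c: "c \<in> K \<inter> X" "\<And>c'. c' \<in> K \<inter> X \<Longrightarrow> A_nbhd c \<subseteq> A_nbhd c'"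
    using clique_least_A_nbhd[of "K \<inter> X"] K(2) False clique_subset by blast
  define S where "S = A_nbhd c"
  have "clique E (K \<inter> X)" using K(2) by (rule clique_subset) simp
  then have "K \<inter> X \<in> cliques_complete_to S"
    using c(2) by (auto simp: cliques_complete_to_def S_def)
  then have KX: "card (K \<inter> X) \<le> max_clique_complete_to S"
    by (rule card_le_max_clique_complete_to)
  have "K - X \<subseteq> S - A0"
  proof
    fix z assume z: "z \<in> K - X"
    then have "z \<in> A - A0" "E c z" using K c(1) unfolding clique_def by auto
    then show "z \<in> S - A0" by (simp add: S_def A_nbhd_def)
  qed
  then have "card (K - X) \<le> card S - card (S \<inter> A0)"
    using finite_A_nbhd card_mono[of "S - A0" "K - X"] by (simp add: S_def card_Diff_subset_Int)
  moreover have "card K = card (K \<inter> X) + card (K - X)"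
    using K(1) finite_X finite_A by (intro card_Int_Diff) (auto intro: finite_subset)
  moreover have "card (S \<inter> A0) \<le> card S" using finite_A_nbhd by (simp add: S_def card_mono)
  moreover have "max_clique_complete_to S + card S - t \<le> card (S \<inter> A0)"
    using c(1) by (intro demand) (simp add: S_def)
  ultimately show ?thesis using KX by linarith
qed

lemma disjoint_demand_sum_le:
  assumes "F \<subseteq> insert A (A_nbhd ` X)" "pairwise disjnt F"
    and "5 * clique_number V E \<le> 4 * (t + card Q)" "clique_number V E < 4 * card Q"
  shows "(\<Sum>S\<in>F. max_clique_complete_to S + card S - t) \<le> card Q"
proof -
  define P where "P = {S \<in> F. t < max_clique_complete_to S + card S}"
  have F_A: "S \<subseteq> A" if "S \<in> F" for S using that assms(1) A_nbhd_subset by blast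
  have "finite F" using assms(1) finite_X by (auto intro: finite_subset)
  then have "(\<Sum>S\<in>F. max_clique_complete_to S + card S - t)
      = (\<Sum>S\<in>P. max_clique_complete_to S + card S - t)"
    by (intro sum.mono_neutral_right) (auto simp: P_def)
  also have "\<dots> \<le> card Q"
  proof (rule excess_sum_le)
    show "finite P" using \<open>finite F\<close> by (simp add: P_def)
    have "pairwise disjnt P" using assms(2) by (rule pairwise_subset) (auto simp: P_def)
    then have "sum card P = card (\<Union>P)"
      using F_A finite_A by (intro card_Union_disjoint[symmetric]) (auto simp: P_def intro: finite_subset)
    also have "\<dots> \<le> card A" using F_A finite_A by (intro card_mono) (auto simp: P_def)
    finally show "sum card P \<le> clique_number V E" using card_A_le by linarith
  qed (use assms(3,4) max_clique_complete_to_add_card_Q max_clique_complete_to_add_card F_A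
       in \<open>auto simp: P_def\<close>)
  finally show ?thesis .
qed

lemma removal_set_exists:
  assumes "5 * clique_number V E \<le> 4 * k"
  obtains A0 where "A0 \<subseteq> A" "card A0 \<le> card Q"
    "\<And>K. K \<subseteq> X \<union> (A - A0) \<Longrightarrow> clique E K \<Longrightarrow> card K \<le> k - card Q"
proof (cases "clique_number V E \<le> k - card Q")
  case True
  have "card K \<le> k - card Q" if "K \<subseteq> X \<union> (A - {})" "clique E K" for K
    using card_clique_le[OF _ that(2)] that(1) V_eq True by fastforce
  then show ?thesis using that[of "{}"] by simp
next
  case False
  define t where "t = k - card Q"
  have k: "5 * clique_number V E \<le> 4 * (t + card Q)" and q: "clique_number V E < 4 * card Q"
    using assms False card_Q_le by (auto simp: t_def)
  define L where "L = insert A (A_nbhd ` X)"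
  define D where "D S = max_clique_complete_to S + card S - t" for S
  have L_A: "S \<subseteq> A" if "S \<in> L" for S using that A_nbhd_subset by (auto simp: L_def)
  have "finite L" using finite_X by (simp add: L_def)
  moreover have "D S \<le> card S" for S
    using max_clique_complete_to_add_card_Q[of S] k by (simp add: D_def)
  moreover have "finite S" if "S \<in> L" for S using L_A[OF that] finite_A by (rule finite_subset)
  ultimately obtain H where H: "H \<subseteq> \<Union>L" "card H \<le> max_disjoint_sum D L"
    "\<And>S. S \<in> L \<Longrightarrow> D S \<le> card (H \<inter> S)"
    using laminar_hitting_set[of L D] laminar_A_nbhds unfolding L_def by blast
  obtain F where F: "F \<subseteq> L" "pairwise disjnt F" "sum D F = max_disjoint_sum D L"
    using max_disjoint_sum_attained[OF \<open>finite L\<close>] .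
  have "sum D F \<le> card Q"
    using disjoint_demand_sum_le[OF F(1)[unfolded L_def] F(2) k q] by (simp add: D_def)
  moreover have "H \<subseteq> A" using H(1) L_A by blast
  moreover have "card K \<le> t" if "K \<subseteq> X \<union> (A - H)" "clique E K" for K
    using clique_card_le_after_removal[OF \<open>H \<subseteq> A\<close> _ that] H(3)
    by (simp add: L_def D_def Int_commute)
  ultimately show ?thesis using that[of H] H(2) F(3) by (simp add: t_def)
qed

definition rank :: "'a \<Rightarrow> nat" where
  "rank v = (if v \<in> A then card A + 1 else card (A_nbhd v))"

lemma later_nbrs_clique:
  assumes "v \<in> X \<union> A"
  shows "clique E {u \<in> X \<union> A. E v u \<and> rank v \<le> rank u}"
proof (cases "v \<in> A")
  case True
  have "rank u \<le> card A" if "u \<in> X" for u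
    using that disjoint(3) card_mono[OF finite_A A_nbhd_subset] by (auto simp: rank_def)
  then have "{u \<in> X \<union> A. E v u \<and> rank v \<le> rank u} \<subseteq> A"
    using True by (fastforce simp: rank_def)
  then show ?thesis by (rule clique_subset[OF clique_A])
next
  case False
  then have v: "v \<in> X" using assms by blast
  define W where "W = {u \<in> X \<union> A. E v u \<and> rank v \<le> rank u}"
  have W: "u \<in> X \<and> A_nbhd v \<subseteq> A_nbhd u \<or> u \<in> A_nbhd v" if "u \<in> W" for u
  proof (cases "u \<in> A")
    case False
    then have "u \<in> X" "E v u" "card (A_nbhd v) \<le> card (A_nbhd u)"
      using that v \<open>v \<notin> A\<close> by (auto simp: W_def rank_def)
    then show ?thesis using A_nbhd_subset_if_card_le v by blast
  qed (use that in \<open>auto simp: W_def A_nbhd_def\<close>)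
  obtain a where a: "a \<in> A_nbhd v" using A_nbhd_nonempty[OF v] by blast
  have "E u u'" if "u \<in> W" "u' \<in> W" "u \<noteq> u'" for u u'
    using W[OF that(1)] W[OF that(2)]
  proof (elim disjE conjE)
    assume "u \<in> X" "A_nbhd v \<subseteq> A_nbhd u" "u' \<in> X" "A_nbhd v \<subseteq> A_nbhd u'"
    then show "E u u'" using common_A_nbr[of u u' a] a that(3) by (auto simp: A_nbhd_def)
  next
    assume "A_nbhd v \<subseteq> A_nbhd u" "u' \<in> A_nbhd v"
    then show "E u u'" by (auto simp: A_nbhd_def)
  next
    assume "u \<in> A_nbhd v" "A_nbhd v \<subseteq> A_nbhd u'"
    then show "E u u'" using E_sym by (auto simp: A_nbhd_def)
  next
    assume "u \<in> A_nbhd v" "u' \<in> A_nbhd v"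
    then show "E u u'" using clique_A that(3) by (auto simp: A_nbhd_def clique_def)
  qed
  then show ?thesis unfolding clique_def W_def by blast
qed

lemma chromatic_number_le:
  assumes "5 * clique_number V E \<le> 4 * k"
  shows "chromatic_number V E \<le> k"
proof -
  obtain A0 where A0: "A0 \<subseteq> A" "card A0 \<le> card Q"
    and cliques: "\<And>K. K \<subseteq> X \<union> (A - A0) \<Longrightarrow> clique E K \<Longrightarrow> card K \<le> k - card Q"
    using removal_set_exists[OF assms] by blast
  have "\<exists>c. proper_colouring (X \<union> (A - A0)) E (k - card Q) c"
  proof (rule greedy_colouring[OF _ E_sym E_irrefl _ cliques])
    show "finite (X \<union> (A - A0))" using finite_X finite_A by simp
    show "clique E {u \<in> X \<union> (A - A0). E v u \<and> rank v \<le> rank u}" if "v \<in> X \<union> (A - A0)" for v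
      using later_nbrs_clique[of v] that by (rule_tac clique_subset) auto
  qed
  then obtain c where c: "proper_colouring (X \<union> (A - A0)) E (k - card Q) c" by blast
  obtain cQ where "proper_colouring Q E (card Q) cQ"
    using proper_colouring_card[of Q E] finite_Q E_irrefl by blast
  moreover obtain cA where "proper_colouring A0 E (card Q) cA"
    using proper_colouring_card[of A0 E] A0 finite_A E_irrefl
    by (meson finite_subset proper_colouring_mono)
  ultimately obtain cQA where "proper_colouring (Q \<union> A0) E (card Q) cQA"
    using proper_colouring_Un_anticomplete Q_A E_sym A0(1) by (metis subsetD)
  then obtain c' where "proper_colouring ((Q \<union> A0) \<union> (X \<union> (A - A0))) E (card Q + (k - card Q)) c'"
    using proper_colouring_Un[OF _ c] by blast
  moreover have "(Q \<union> A0) \<union> (X \<union> (A - A0)) = V" using V_eq A0(1) by blast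
  moreover have "card Q \<le> k" using card_Q_le assms by linarith
  ultimately show ?thesis using proper_colouring_imp_chromatic_number_le by fastforce
qed

end

theorem lemma5p14:
  fixes V :: "'a set" and E :: "'a \<Rightarrow> 'a \<Rightarrow> bool"
  assumes "simple_graph V E"
    and "extended_C_pair V E"
  shows "int (chromatic_number V E) \<le> \<lceil>5 / 4 * real (clique_number V E)\<rceil>"
proof -
  obtain Q X A where "extended_pair V E Q X A"
    using extended_C_pair_imp_extended_pair[OF assms] by blast
  define k where "k = nat \<lceil>5 / 4 * real (clique_number V E)\<rceil>"
  have "5 / 4 * real (clique_number V E) \<le> real k"
    unfolding k_def by linarith
  then have "5 * clique_number V E \<le> 4 * k" by linarith
  then have "chromatic_number V E \<le> k"
    using extended_pair.chromatic_number_le[OF \<open>extended_pair V E Q X A\<close>] by blast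
  then show ?thesis unfolding k_def by linarith
qed

end
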